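(* Let $X$ be a uniformly locally finite metric space and $h$ a closed operator on $\ell_2(X)$ whose domain is invariant under partial translations. Then $h$ is a coarse operator if and only if, for every $r>0$, \[ \sup_f\|[h,v_f]\|<\infty, \] the supremum taken over all partial $r$-translations $f$ of $X$.
   Context: Uniformly locally finite: $\sup_x|B_r(x)|<\infty$ for all $r>0$. A partial translation is a bijection $f\colon\mathrm{dom}(f)\subseteq X\to\mathrm{ran}(f)\subseteq X$ with $\sup_{x\in\mathrm{dom}(f)}d(x,f(x))<\infty$; a partial $r$-translation if the supremum is at most $r$. $v_f\delta_x=\delta_{f(x)}$ for $x\in\mathrm{dom}(f)$, $0$ otherwise. The domain is invariant under partial translations if $v_f(\mathrm{dom}(h))\subseteq\mathrm{dom}(h)$ for all partial translations $f$. $[h,v_f]=hv_f-v_fh$ on $\mathrm{dom}(h)$ with possibly infinite norm. A closed operator $h$ is a coarse operator if its domain is invariant under partial translations and $\|[h,v_f]\|<\infty$ for every partial translation $f$. *)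

theory Defs
  imports "HOL-Analysis.Analysis"
begin

text \<open>The metric space X is the whole of a type 'a of class metric_space.
  Vectors of l2(X) are functions 'a => complex that are square summable.\<close>

definition uniformly_locally_finite :: "'a::metric_space itself \<Rightarrow> bool" where
  "uniformly_locally_finite _ \<longleftrightarrow>
     (\<forall>r>0. \<exists>N::nat. \<forall>x::'a. finite (cball x r) \<and> card (cball x r) \<le> N)"

definition ell2 :: "('a \<Rightarrow> complex) set" where
  "ell2 = {\<xi>. (\<lambda>x. (cmod (\<xi> x))\<^sup>2) summable_on UNIV}"

definition l2norm :: "('a \<Rightarrow> complex) \<Rightarrow> real" where
  "l2norm \<xi> = sqrt (infsum (\<lambda>x. (cmod (\<xi> x))\<^sup>2) UNIV)"

text \<open>A (possibly unbounded) operator on l2(X) is given by its domain D and a map h;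
  only the values of h on D matter.\<close>

definition closed_operator :: "('a \<Rightarrow> complex) set \<Rightarrow> (('a \<Rightarrow> complex) \<Rightarrow> ('a \<Rightarrow> complex)) \<Rightarrow> bool" where
  "closed_operator D h \<longleftrightarrow>
     D \<subseteq> ell2 \<and> (\<lambda>x. 0) \<in> D \<and>
     (\<forall>\<xi>\<in>D. \<forall>\<eta>\<in>D. (\<lambda>x. \<xi> x + \<eta> x) \<in> D \<and> h (\<lambda>x. \<xi> x + \<eta> x) = (\<lambda>x. h \<xi> x + h \<eta> x)) \<and>
     (\<forall>c::complex. \<forall>\<xi>\<in>D. (\<lambda>x. c * \<xi> x) \<in> D \<and> h (\<lambda>x. c * \<xi> x) = (\<lambda>x. c * h \<xi> x)) \<and>
     (\<forall>\<xi>\<in>D. h \<xi> \<in> ell2) \<and>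
     (\<forall>\<xi>s \<xi> \<eta>. (\<forall>n. \<xi>s n \<in> D) \<and> \<xi> \<in> ell2 \<and> \<eta> \<in> ell2 \<and>
        (\<lambda>n. l2norm (\<lambda>x. \<xi>s n x - \<xi> x)) \<longlonglongrightarrow> 0 \<and>
        (\<lambda>n. l2norm (\<lambda>x. h (\<xi>s n) x - \<eta> x)) \<longlonglongrightarrow> 0
        \<longrightarrow> \<xi> \<in> D \<and> h \<xi> = \<eta>)"

definition partial_translation :: "'a::metric_space set \<Rightarrow> ('a \<Rightarrow> 'a) \<Rightarrow> bool" where
  "partial_translation A f \<longleftrightarrow> inj_on f A \<and> (\<exists>c. \<forall>x\<in>A. dist x (f x) \<le> c)"

definition partial_r_translation :: "real \<Rightarrow> 'a::metric_space set \<Rightarrow> ('a \<Rightarrow> 'a) \<Rightarrow> bool" where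
  "partial_r_translation r A f \<longleftrightarrow> inj_on f A \<and> (\<forall>x\<in>A. dist x (f x) \<le> r)"

text \<open>The partial isometry v_f: v_f delta_x = delta_(f x) for x in A, 0 otherwise.\<close>

definition vf :: "'a set \<Rightarrow> ('a \<Rightarrow> 'a) \<Rightarrow> ('a \<Rightarrow> complex) \<Rightarrow> ('a \<Rightarrow> complex)" where
  "vf A f \<xi> = (\<lambda>y. if y \<in> f ` A then \<xi> (the_inv_into A f y) else 0)"

definition domain_invariant :: "('a::metric_space \<Rightarrow> complex) set \<Rightarrow> bool" where
  "domain_invariant D \<longleftrightarrow> (\<forall>A f. partial_translation A f \<longrightarrow> vf A f ` D \<subseteq> D)"

definition comm_norm :: "('a \<Rightarrow> complex) set \<Rightarrow> (('a \<Rightarrow> complex) \<Rightarrow> ('a \<Rightarrow> complex))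
    \<Rightarrow> 'a set \<Rightarrow> ('a \<Rightarrow> 'a) \<Rightarrow> ennreal" where
  "comm_norm D h A f =
     (SUP \<xi>\<in>{\<xi>\<in>D. l2norm \<xi> \<le> 1}. ennreal (l2norm (\<lambda>x. h (vf A f \<xi>) x - vf A f (h \<xi>) x)))"

definition coarse_operator :: "('a::metric_space \<Rightarrow> complex) set \<Rightarrow> (('a \<Rightarrow> complex) \<Rightarrow> ('a \<Rightarrow> complex)) \<Rightarrow> bool" where
  "coarse_operator D h \<longleftrightarrow> closed_operator D h \<and> domain_invariant D \<and>
     (\<forall>A f. partial_translation A f \<longrightarrow> comm_norm D h A f < \<infinity>)"

end

theory Submission
  imports Defs
begin

text \<open>The converse direction is immediate, since every partial translation is a partial
  \<open>r\<close>-translation for some \<open>r\<close>.  Suppose \<open>h\<close> is coarse but the commutators of partial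
  \<open>r\<close>-translations are unbounded.  As balls are finite and the commutator norm is subadditive
  under splitting the domain of \<open>f\<close>, changing \<open>f\<close> on a ball costs a bounded amount; hence
  partial \<open>r\<close>-translations with arbitrarily large commutator exist that agree with any given one
  on any given ball.  The commutator norm is lower semicontinuous for agreement on growing balls
  (this is where closedness of \<open>h\<close> enters), so a large commutator persists under agreement on
  a large enough ball.  A diagonal construction then yields a single partial \<open>r\<close>-translation with
  infinite commutator norm, contradicting coarseness.\<close>

section \<open>Square-summable functions\<close>

abbreviation sqmod :: "('a \<Rightarrow> complex) \<Rightarrow> 'a \<Rightarrow> real" where
  "sqmod \<xi> x \<equiv> (cmod (\<xi> x))\<^sup>2"

abbreviation midpt :: "('a \<Rightarrow> complex) \<Rightarrow> ('a \<Rightarrow> complex) \<Rightarrow> 'a \<Rightarrow> complex" where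
  "midpt u v \<equiv> (\<lambda>x. (1/2) * (u x + v x))"

lemma LIMSEQ_zero_if_eventually_le:
  assumes "\<And>e. e > 0 \<Longrightarrow> \<exists>N. \<forall>n\<ge>N. 0 \<le> a n \<and> a n \<le> e"
  shows "a \<longlonglongrightarrow> (0::real)"
proof (rule LIMSEQ_I)
  fix r :: real assume "r > 0"
  then obtain N where "\<forall>n\<ge>N. 0 \<le> a n \<and> a n \<le> r / 2" using assms[of "r / 2"] by auto
  with \<open>r > 0\<close> show "\<exists>N. \<forall>n\<ge>N. norm (a n - 0) < r" by (intro exI[of _ N]) auto
qed

lemma l2norm_nonneg: "0 \<le> l2norm \<xi>"
  unfolding l2norm_def by (simp add: infsum_nonneg)

lemma l2norm_power2: "(l2norm \<xi>)\<^sup>2 = infsum (sqmod \<xi>) UNIV"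
  unfolding l2norm_def by (simp add: infsum_nonneg)

lemma sum_sqmod_le_l2norm: "\<xi> \<in> ell2 \<Longrightarrow> finite G \<Longrightarrow> sum (sqmod \<xi>) G \<le> (l2norm \<xi>)\<^sup>2"
  unfolding l2norm_power2 ell2_def by (intro finite_sum_le_infsum) auto

lemma ell2_finite_sums_bounded:
  assumes sums: "\<And>G. finite G \<Longrightarrow> sum (sqmod \<xi>) G \<le> B\<^sup>2" and "0 \<le> B"
  shows "\<xi> \<in> ell2" "l2norm \<xi> \<le> B"
proof -
  have summable: "sqmod \<xi> summable_on UNIV"
    by (rule nonneg_bdd_above_summable_on) (auto intro!: bdd_aboveI sums)
  then show "\<xi> \<in> ell2" unfolding ell2_def by simp
  have "(l2norm \<xi>)\<^sup>2 \<le> B\<^sup>2" unfolding l2norm_power2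
    by (rule infsum_le_finite_sums[OF summable]) (auto intro: sums)
  then show "l2norm \<xi> \<le> B" using \<open>0 \<le> B\<close> by (rule power2_le_imp_le)
qed

lemma L2_set_le_l2norm: "\<xi> \<in> ell2 \<Longrightarrow> finite G \<Longrightarrow> L2_set (\<lambda>x. cmod (\<xi> x)) G \<le> l2norm \<xi>"
  using real_sqrt_le_mono[OF sum_sqmod_le_l2norm[of \<xi> G]] l2norm_nonneg[of \<xi>] by (simp add: L2_set_def)

lemma ell2_add:
  assumes "u \<in> ell2" "v \<in> ell2"
  shows "(\<lambda>x. u x + v x) \<in> ell2" "l2norm (\<lambda>x. u x + v x) \<le> l2norm u + l2norm v"
proof -
  have sums: "sum (sqmod (\<lambda>x. u x + v x)) G \<le> (l2norm u + l2norm v)\<^sup>2" if "finite G" for G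
  proof -
    have "L2_set (\<lambda>x. cmod (u x + v x)) G \<le> L2_set (\<lambda>x. cmod (u x) + cmod (v x)) G"
      by (rule L2_set_mono) (auto simp: norm_triangle_ineq)
    also have "\<dots> \<le> L2_set (\<lambda>x. cmod (u x)) G + L2_set (\<lambda>x. cmod (v x)) G"
      by (rule L2_set_triangle_ineq)
    also have "\<dots> \<le> l2norm u + l2norm v"
      using L2_set_le_l2norm[OF assms(1) that] L2_set_le_l2norm[OF assms(2) that] by simp
    finally have "sqrt (sum (sqmod (\<lambda>x. u x + v x)) G) \<le> l2norm u + l2norm v"
      unfolding L2_set_def .
    then have "(sqrt (sum (sqmod (\<lambda>x. u x + v x)) G))\<^sup>2 \<le> (l2norm u + l2norm v)\<^sup>2"
      by (rule power_mono) (auto intro!: sum_nonneg)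
    then show ?thesis by (simp add: sum_nonneg)
  qed
  have nonneg: "0 \<le> l2norm u + l2norm v" by (simp add: l2norm_nonneg)
  from sums nonneg show "(\<lambda>x. u x + v x) \<in> ell2" by (rule ell2_finite_sums_bounded)
  from sums nonneg show "l2norm (\<lambda>x. u x + v x) \<le> l2norm u + l2norm v" by (rule ell2_finite_sums_bounded)
qed

lemma ell2_scale:
  assumes "u \<in> ell2"
  shows "(\<lambda>x. c * u x) \<in> ell2" "l2norm (\<lambda>x. c * u x) = cmod c * l2norm u"
proof -
  have sqmod_scale: "sqmod (\<lambda>x. c * u x) = (\<lambda>x. (cmod c)\<^sup>2 * sqmod u x)"
    by (auto simp: norm_mult power_mult_distrib)
  have summable: "sqmod u summable_on UNIV" using assms unfolding ell2_def by simp
  show "(\<lambda>x. c * u x) \<in> ell2" unfolding ell2_def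
    using summable_on_cmult_right[OF summable, of "(cmod c)\<^sup>2"] by (simp add: norm_mult power_mult_distrib)
  have "(l2norm (\<lambda>x. c * u x))\<^sup>2 = (cmod c * l2norm u)\<^sup>2"
    unfolding l2norm_power2 sqmod_scale power_mult_distrib infsum_cmult_right[OF summable] by simp
  then show "l2norm (\<lambda>x. c * u x) = cmod c * l2norm u"
    by (simp add: l2norm_nonneg power2_eq_iff_nonneg)
qed

lemma ell2_diff:
  assumes "u \<in> ell2" "v \<in> ell2"
  shows "(\<lambda>x. u x - v x) \<in> ell2" "l2norm (\<lambda>x. u x - v x) \<le> l2norm u + l2norm v"
  using ell2_add[OF assms(1) ell2_scale(1)[OF assms(2), of "-1"]] ell2_scale(2)[OF assms(2), of "-1"]
  by simp_all

lemma ell2_zero: "(\<lambda>x. 0) \<in> ell2" "l2norm (\<lambda>x. 0) = 0"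
  unfolding ell2_def l2norm_def by simp_all

lemma norm_le_l2norm: "\<xi> \<in> ell2 \<Longrightarrow> cmod (\<xi> y) \<le> l2norm \<xi>"
  using sum_sqmod_le_l2norm[of \<xi> "{y}"] by (intro power2_le_imp_le[OF _ l2norm_nonneg]) simp

lemma l2norm_midpt:
  assumes "u \<in> ell2" "v \<in> ell2"
  shows "midpt u v \<in> ell2" "l2norm (midpt u v) = l2norm (\<lambda>x. u x + v x) / 2"
    "l2norm (midpt u v) \<le> (l2norm u + l2norm v) / 2"
  using ell2_scale[OF ell2_add(1)[OF assms], of "1/2"] ell2_add(2)[OF assms] by simp_all

lemma l2norm_parallelogram:
  assumes "u \<in> ell2" "v \<in> ell2"
  shows "(l2norm (\<lambda>x. u x + v x))\<^sup>2 + (l2norm (\<lambda>x. u x - v x))\<^sup>2 = 2 * (l2norm u)\<^sup>2 + 2 * (l2norm v)\<^sup>2"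
proof -
  have summable: "sqmod u summable_on UNIV" "sqmod v summable_on UNIV"
    "sqmod (\<lambda>x. u x + v x) summable_on UNIV" "sqmod (\<lambda>x. u x - v x) summable_on UNIV"
    using assms ell2_add ell2_diff unfolding ell2_def by auto
  have pointwise: "sqmod (\<lambda>x. u x + v x) x + sqmod (\<lambda>x. u x - v x) x = 2 * sqmod u x + 2 * sqmod v x" for x
    unfolding cmod_power2 by (simp add: power2_eq_square algebra_simps)
  have "(l2norm (\<lambda>x. u x + v x))\<^sup>2 + (l2norm (\<lambda>x. u x - v x))\<^sup>2
     = infsum (sqmod (\<lambda>x. u x + v x)) UNIV + infsum (sqmod (\<lambda>x. u x - v x)) UNIV"
    by (simp only: l2norm_power2)
  also have "\<dots> = infsum (\<lambda>x. sqmod (\<lambda>x. u x + v x) x + sqmod (\<lambda>x. u x - v x) x) UNIV"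
    using infsum_add[OF summable(3,4)] by simp
  also have "\<dots> = infsum (\<lambda>x. 2 * sqmod u x + 2 * sqmod v x) UNIV"
    unfolding pointwise ..
  also have "\<dots> = infsum (\<lambda>x. 2 * sqmod u x) UNIV + infsum (\<lambda>x. 2 * sqmod v x) UNIV"
    by (rule infsum_add[OF summable_on_cmult_right[OF summable(1)] summable_on_cmult_right[OF summable(2)]])
  also have "\<dots> = 2 * (l2norm u)\<^sup>2 + 2 * (l2norm v)\<^sup>2"
    by (simp only: infsum_cmult_right[OF summable(1)] infsum_cmult_right[OF summable(2)] l2norm_power2)
  finally show ?thesis .
qed

lemma ell2_pointwise_limit:
  assumes v: "\<And>n. v n \<in> ell2" and bound: "\<And>n. l2norm (v n) \<le> M"
    and lim: "\<And>y. (\<lambda>n. v n y) \<longlonglongrightarrow> w y"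
  shows "w \<in> ell2" "l2norm w \<le> M"
proof -
  have sums: "sum (sqmod w) G \<le> M\<^sup>2" if "finite G" for G
  proof (rule LIMSEQ_le_const2)
    show "(\<lambda>n. sum (sqmod (v n)) G) \<longlonglongrightarrow> sum (sqmod w) G"
      by (intro tendsto_sum tendsto_power tendsto_norm lim)
    show "\<exists>N. \<forall>n\<ge>N. sum (sqmod (v n)) G \<le> M\<^sup>2"
      using order_trans[OF sum_sqmod_le_l2norm[OF v that] power_mono[OF bound l2norm_nonneg]] by blast
  qed
  have nonneg: "0 \<le> M" using l2norm_nonneg[of "v 0"] bound[of 0] by linarith
  from sums nonneg show "w \<in> ell2" by (rule ell2_finite_sums_bounded)
  from sums nonneg show "l2norm w \<le> M" by (rule ell2_finite_sums_bounded)
qed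

lemma ell2_Cauchy_convergent:
  assumes v: "\<And>n. v n \<in> ell2"
    and v_Cauchy: "\<And>e. e > 0 \<Longrightarrow> \<exists>N. \<forall>m\<ge>N. \<forall>n\<ge>N. l2norm (\<lambda>x. v m x - v n x) < e"
  obtains \<eta> where "\<eta> \<in> ell2" "(\<lambda>n. l2norm (\<lambda>x. v n x - \<eta> x)) \<longlonglongrightarrow> 0"
proof -
  have "Cauchy (\<lambda>n. v n y)" for y
  proof (rule metric_CauchyI)
    fix e :: real assume "e > 0"
    then obtain N where "\<forall>m\<ge>N. \<forall>n\<ge>N. l2norm (\<lambda>x. v m x - v n x) < e" using v_Cauchy by blast
    then show "\<exists>N. \<forall>m\<ge>N. \<forall>n\<ge>N. dist (v m y) (v n y) < e"
      using norm_le_l2norm[OF ell2_diff(1)[OF v v]] by (metis dist_norm order.strict_trans1)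
  qed
  then obtain \<eta> where lim: "\<And>y. (\<lambda>n. v n y) \<longlonglongrightarrow> \<eta> y"
    unfolding Cauchy_convergent_iff convergent_def by metis
  have close: "\<exists>N. \<forall>m\<ge>N. (\<lambda>x. v m x - \<eta> x) \<in> ell2 \<and> l2norm (\<lambda>x. v m x - \<eta> x) \<le> e" if "e > 0" for e
  proof -
    obtain N where N: "\<forall>m\<ge>N. \<forall>n\<ge>N. l2norm (\<lambda>x. v m x - v n x) < e" using v_Cauchy[OF \<open>e > 0\<close>] by blast
    have "(\<lambda>x. v m x - \<eta> x) \<in> ell2 \<and> l2norm (\<lambda>x. v m x - \<eta> x) \<le> e" if "m \<ge> N" for m
    proof -
      have "(\<lambda>k. v m y - v (k + N) y) \<longlonglongrightarrow> v m y - \<eta> y" for y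
        by (intro tendsto_diff tendsto_const) (rule LIMSEQ_ignore_initial_segment[OF lim])
      moreover have "l2norm (\<lambda>x. v m x - v (k + N) x) \<le> e" for k
        using N that le_add2 less_imp_le by blast
      ultimately show ?thesis
        using ell2_pointwise_limit[of "\<lambda>k x. v m x - v (k + N) x" e "\<lambda>x. v m x - \<eta> x", OF ell2_diff(1)[OF v v]]
        by blast
    qed
    then show ?thesis by blast
  qed
  then obtain N where "(\<lambda>x. v N x - \<eta> x) \<in> ell2" using zero_less_one by blast
  from ell2_diff(1)[OF v[of N] this] have "\<eta> \<in> ell2" by simp
  moreover have "(\<lambda>n. l2norm (\<lambda>x. v n x - \<eta> x)) \<longlonglongrightarrow> 0"
  proof (rule LIMSEQ_zero_if_eventually_le)
    fix e :: real assume "e > 0"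
    then show "\<exists>N. \<forall>n\<ge>N. 0 \<le> l2norm (\<lambda>x. v n x - \<eta> x) \<and> l2norm (\<lambda>x. v n x - \<eta> x) \<le> e"
      using close[of e] l2norm_nonneg by blast
  qed
  ultimately show ?thesis by (rule that)
qed

lemma ell2_small_tail:
  assumes "\<xi> \<in> ell2" "e > 0"
  obtains G where "finite G" "\<And>H. finite H \<Longrightarrow> H \<inter> G = {} \<Longrightarrow> sum (sqmod \<xi>) H \<le> e"
proof -
  have bdd: "bdd_above (sum (sqmod \<xi>) ` {F. finite F})"
    using sum_sqmod_le_l2norm[OF assms(1)] by (auto intro!: bdd_aboveI)
  have "infsum (sqmod \<xi>) UNIV = (SUP F\<in>{F. finite F}. sum (sqmod \<xi>) F)"
    using nonneg_bdd_above_infsum[of UNIV "sqmod \<xi>"] bdd by simp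
  then have "infsum (sqmod \<xi>) UNIV - e < (SUP F\<in>{F. finite F}. sum (sqmod \<xi>) F)"
    using assms(2) by linarith
  moreover have nonempty: "{F. finite F} \<noteq> {}" by auto
  ultimately obtain G where G: "finite G" "infsum (sqmod \<xi>) UNIV - e < sum (sqmod \<xi>) G"
    unfolding less_cSUP_iff[OF nonempty bdd] by auto
  have "sum (sqmod \<xi>) H \<le> e" if "finite H" "H \<inter> G = {}" for H
  proof -
    have "sum (sqmod \<xi>) G + sum (sqmod \<xi>) H = sum (sqmod \<xi>) (G \<union> H)"
      using that G(1) by (simp add: sum.union_disjoint inf_commute)
    also have "\<dots> \<le> infsum (sqmod \<xi>) UNIV"
      using sum_sqmod_le_l2norm[OF assms(1), of "G \<union> H"] that G(1) unfolding l2norm_power2 by simp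
    finally show ?thesis using G(2) by linarith
  qed
  with G(1) show ?thesis using that by blast
qed

definition inf_l2norm :: "('a \<Rightarrow> complex) set \<Rightarrow> real" where
  "inf_l2norm S = Inf (l2norm ` S)"

lemma bdd_below_l2norm: "bdd_below (l2norm ` S)"
  by (rule bdd_belowI[of _ 0]) (auto simp: l2norm_nonneg)

lemma inf_l2norm_le: "u \<in> S \<Longrightarrow> inf_l2norm S \<le> l2norm u"
  unfolding inf_l2norm_def by (rule cINF_lower[OF bdd_below_l2norm])

lemma inf_l2norm_nonneg: "S \<noteq> {} \<Longrightarrow> 0 \<le> inf_l2norm S"
  unfolding inf_l2norm_def by (auto intro!: cInf_greatest simp: l2norm_nonneg)

lemma inf_l2norm_antimono: "T \<noteq> {} \<Longrightarrow> T \<subseteq> S \<Longrightarrow> inf_l2norm S \<le> inf_l2norm T"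
  unfolding inf_l2norm_def by (intro cInf_superset_mono bdd_below_l2norm) auto

lemma inf_l2norm_less_iff: "S \<noteq> {} \<Longrightarrow> inf_l2norm S < c \<longleftrightarrow> (\<exists>u\<in>S. l2norm u < c)"
  unfolding inf_l2norm_def using cInf_less_iff[OF _ bdd_below_l2norm] by auto

lemma exists_near_minimal_l2norm:
  assumes "S \<noteq> {}" "0 < \<epsilon>"
  obtains u where "u \<in> S" "(l2norm u)\<^sup>2 \<le> (inf_l2norm S)\<^sup>2 + \<epsilon>"
proof -
  have nonneg: "0 \<le> (inf_l2norm S)\<^sup>2 + \<epsilon>" using assms(2) by simp
  have "inf_l2norm S < sqrt ((inf_l2norm S)\<^sup>2 + \<epsilon>)"
    using inf_l2norm_nonneg[OF assms(1)] assms(2) by (simp add: real_less_rsqrt)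
  then obtain u where u: "u \<in> S" "l2norm u < sqrt ((inf_l2norm S)\<^sup>2 + \<epsilon>)"
    using inf_l2norm_less_iff[OF assms(1)] by blast
  have "(l2norm u)\<^sup>2 \<le> (sqrt ((inf_l2norm S)\<^sup>2 + \<epsilon>))\<^sup>2"
    using u(2) by (intro power_mono) (auto simp: l2norm_nonneg)
  with u(1) nonneg show ?thesis by (intro that[of u]) simp_all
qed

lemma l2norm_diff_power2_le_if_midpt_ge:
  assumes "u \<in> ell2" "v \<in> ell2" "0 \<le> d" "d \<le> l2norm (midpt u v)"
  shows "(l2norm (\<lambda>x. u x - v x))\<^sup>2 \<le> 2 * (l2norm u)\<^sup>2 + 2 * (l2norm v)\<^sup>2 - 4 * d\<^sup>2"
proof -
  have "2 * d \<le> l2norm (\<lambda>x. u x + v x)" using l2norm_midpt(2)[OF assms(1,2)] assms(4) by linarith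
  then have "(2 * d)\<^sup>2 \<le> (l2norm (\<lambda>x. u x + v x))\<^sup>2" using assms(3) by (intro power_mono) auto
  then show ?thesis using l2norm_parallelogram[OF assms(1,2)] by simp
qed

text \<open>As in the projection theorem: pick \<open>s m\<close> of almost minimal norm in \<open>S m\<close>; since the
  midpoint of \<open>s m\<close> and \<open>s n\<close> lies in \<open>S (min m n)\<close>, the parallelogram law turns the convergence
  of the minimal norms into the Cauchy property.\<close>

lemma nested_midpoint_closed_Cauchy_selection:
  fixes S :: "nat \<Rightarrow> ('a \<Rightarrow> complex) set"
  assumes S_ell2: "\<And>m. S m \<subseteq> ell2" and S_nonempty: "\<And>m. S m \<noteq> {}"
    and S_decreasing: "\<And>m m'. m \<le> m' \<Longrightarrow> S m' \<subseteq> S m"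
    and S_midpt: "\<And>m u v. u \<in> S m \<Longrightarrow> v \<in> S m \<Longrightarrow> midpt u v \<in> S m"
    and S_bounded: "\<And>m u. u \<in> S m \<Longrightarrow> l2norm u \<le> K"
  obtains s \<eta> where "\<And>m. s m \<in> S m" "\<eta> \<in> ell2" "(\<lambda>n. l2norm (\<lambda>x. s n x - \<eta> x)) \<longlonglongrightarrow> 0"
proof -
  define d where "d m = inf_l2norm (S m)" for m
  have d_le: "d m \<le> l2norm u" if "u \<in> S m" for u m
    unfolding d_def using that by (rule inf_l2norm_le)
  have d_nonneg: "0 \<le> d m" for m
    unfolding d_def using S_nonempty by (rule inf_l2norm_nonneg)
  have d_le_K: "d m \<le> K" for m
    using S_nonempty[of m] d_le S_bounded by (meson all_not_in_conv order_trans)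
  have d_mono: "d m \<le> d m'" if "m \<le> m'" for m m'
    unfolding d_def using S_nonempty S_decreasing[OF that] by (rule inf_l2norm_antimono)
  have "convergent d"
    by (rule Bseq_mono_convergent) (use d_nonneg d_le_K d_mono in \<open>auto intro!: BseqI'[of _ K]\<close>)
  then have d_Cauchy: "Cauchy (\<lambda>m. (d m)\<^sup>2)"
    by (intro convergent_Cauchy) (metis convergent_def tendsto_power)
  define t where "t m = (d m)\<^sup>2 + inverse (real (Suc m))" for m
  have "\<exists>u\<in>S m. (l2norm u)\<^sup>2 \<le> t m" for m
    by (rule exists_near_minimal_l2norm[OF S_nonempty, of "inverse (real (Suc m))"])
      (auto simp: t_def d_def)
  then obtain s where s_in: "\<And>m. s m \<in> S m" and s_small: "\<And>m. (l2norm (s m))\<^sup>2 \<le> t m"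
    by metis
  have s_ell2: "s m \<in> ell2" for m using S_ell2 s_in by blast
  have s_dist: "(l2norm (\<lambda>x. s m x - s n x))\<^sup>2 \<le> 2 * (t m - (d k)\<^sup>2) + 2 * (t n - (d k)\<^sup>2)"
    if "k = min m n" for m n k
  proof -
    have "s m \<in> S k" "s n \<in> S k"
      using s_in S_decreasing that by (meson min.cobounded1 min.cobounded2 subsetD)+
    then have "d k \<le> l2norm (midpt (s m) (s n))" by (intro d_le S_midpt)
    from l2norm_diff_power2_le_if_midpt_ge[OF s_ell2 s_ell2 d_nonneg this]
    show ?thesis using s_small[of m] s_small[of n] by simp
  qed
  have "\<exists>N. \<forall>m\<ge>N. \<forall>n\<ge>N. l2norm (\<lambda>x. s m x - s n x) < e" if e: "e > 0" for e
  proof -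
    obtain N1 where N1: "\<And>m n. m \<ge> N1 \<Longrightarrow> n \<ge> N1 \<Longrightarrow> \<bar>(d m)\<^sup>2 - (d n)\<^sup>2\<bar> < e\<^sup>2 / 8"
      using d_Cauchy e unfolding Cauchy_def dist_real_def by (metis divide_pos_pos zero_less_numeral zero_less_power)
    obtain N2 where N2: "inverse (real (Suc N2)) < e\<^sup>2 / 8"
      using reals_Archimedean e by (metis divide_pos_pos zero_less_numeral zero_less_power)
    have "l2norm (\<lambda>x. s m x - s n x) < e" if "m \<ge> max N1 N2" "n \<ge> max N1 N2" for m n
    proof -
      have small: "inverse (real (Suc j)) < e\<^sup>2 / 8" if "j \<ge> N2" for j
        using N2 that by (smt (verit) le_imp_inverse_le of_nat_0_less_iff of_nat_mono zero_less_Suc Suc_le_mono)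
      have "(d m)\<^sup>2 - (d (min m n))\<^sup>2 < e\<^sup>2 / 8" "(d n)\<^sup>2 - (d (min m n))\<^sup>2 < e\<^sup>2 / 8"
        using N1[of m "min m n"] N1[of n "min m n"] that by (smt (verit) max.bounded_iff min_def)+
      then have "(l2norm (\<lambda>x. s m x - s n x))\<^sup>2 < e\<^sup>2"
        using s_dist[OF refl, of m n] small[of m] small[of n] that unfolding t_def by simp
      then show ?thesis using e by (simp add: power_less_imp_less_base)
    qed
    then show ?thesis by blast
  qed
  with s_ell2 obtain \<eta> where "\<eta> \<in> ell2" "(\<lambda>n. l2norm (\<lambda>x. s n x - \<eta> x)) \<longlonglongrightarrow> 0"
    by (rule ell2_Cauchy_convergent)
  with s_in show ?thesis by (rule that)
qed

section \<open>Closed operators\<close>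

lemma closed_operator_dom_ell2: "closed_operator D h \<Longrightarrow> \<xi> \<in> D \<Longrightarrow> \<xi> \<in> ell2"
  unfolding closed_operator_def by blast

lemma closed_operator_ell2: "closed_operator D h \<Longrightarrow> \<xi> \<in> D \<Longrightarrow> h \<xi> \<in> ell2"
  unfolding closed_operator_def by blast

lemma closed_operator_zero: "closed_operator D h \<Longrightarrow> (\<lambda>x. 0) \<in> D"
  unfolding closed_operator_def by blast

lemma closed_operator_add: "closed_operator D h \<Longrightarrow> \<xi> \<in> D \<Longrightarrow> \<eta> \<in> D \<Longrightarrow>
    (\<lambda>x. \<xi> x + \<eta> x) \<in> D \<and> h (\<lambda>x. \<xi> x + \<eta> x) = (\<lambda>x. h \<xi> x + h \<eta> x)"
  unfolding closed_operator_def by blast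

lemma closed_operator_scale: "closed_operator D h \<Longrightarrow> \<xi> \<in> D \<Longrightarrow>
    (\<lambda>x. c * \<xi> x) \<in> D \<and> h (\<lambda>x. c * \<xi> x) = (\<lambda>x. c * h \<xi> x)"
  unfolding closed_operator_def by blast

lemma closed_operator_graph_closed: "closed_operator D h \<Longrightarrow> (\<And>n. \<xi>s n \<in> D) \<Longrightarrow> \<xi> \<in> ell2 \<Longrightarrow> \<eta> \<in> ell2 \<Longrightarrow>
    (\<lambda>n. l2norm (\<lambda>x. \<xi>s n x - \<xi> x)) \<longlonglongrightarrow> 0 \<Longrightarrow> (\<lambda>n. l2norm (\<lambda>x. h (\<xi>s n) x - \<eta> x)) \<longlonglongrightarrow> 0 \<Longrightarrow>
    \<xi> \<in> D \<and> h \<xi> = \<eta>"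
  unfolding closed_operator_def by blast

lemma closed_operator_diff:
  assumes "closed_operator D h" "\<xi> \<in> D" "\<eta> \<in> D"
  shows "(\<lambda>x. \<xi> x - \<eta> x) \<in> D \<and> h (\<lambda>x. \<xi> x - \<eta> x) = (\<lambda>x. h \<xi> x - h \<eta> x)"
proof -
  have minus: "(\<lambda>x. (-1) * \<eta> x) \<in> D" "h (\<lambda>x. (-1) * \<eta> x) = (\<lambda>x. (-1) * h \<eta> x)"
    using closed_operator_scale[OF assms(1,3), of "-1"] by simp_all
  show ?thesis using closed_operator_add[OF assms(1,2) minus(1)] unfolding minus(2) by simp
qed

lemma closed_operator_apply_zero:
  assumes "closed_operator D h" shows "h (\<lambda>x. 0) = (\<lambda>x. 0)"
  using closed_operator_scale[OF assms closed_operator_zero[OF assms], of 0] by simp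

lemma closed_operator_midpt:
  assumes "closed_operator D h" "u \<in> D" "v \<in> D"
  shows "midpt u v \<in> D \<and> h (midpt u v) = midpt (h u) (h v)"
  using closed_operator_add[OF assms] closed_operator_scale[OF assms(1), of "\<lambda>x. u x + v x" "1/2"] by simp

lemma closed_operator_rotate:
  assumes co: "closed_operator D h" and w: "w \<in> D"
  obtains u where "u \<in> D" "l2norm u = l2norm w" "l2norm (h u) = l2norm (h w)" "Re (h u y) = cmod (h w y)"
proof (cases "h w y = 0")
  case True
  with w show ?thesis by (intro that) auto
next
  case False
  define c where "c = cnj (h w y) / complex_of_real (cmod (h w y))"
  have "cnj (h w y) * h w y = complex_of_real (cmod (h w y)) * complex_of_real (cmod (h w y))"
    using complex_norm_square[of "h w y"] by (simp add: mult.commute power2_eq_square)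
  with False have c: "cmod c = 1" "c * h w y = complex_of_real (cmod (h w y))"
    unfolding c_def by (auto simp: norm_divide)
  have u: "(\<lambda>x. c * w x) \<in> D" "h (\<lambda>x. c * w x) = (\<lambda>x. c * h w x)"
    using closed_operator_scale[OF co w] by auto
  show ?thesis
  proof (rule that[OF u(1)])
    show "l2norm (\<lambda>x. c * w x) = l2norm w"
      using ell2_scale(2)[OF closed_operator_dom_ell2[OF co w]] c(1) by simp
    show "l2norm (h (\<lambda>x. c * w x)) = l2norm (h w)"
      unfolding u(2) using ell2_scale(2)[OF closed_operator_ell2[OF co w]] c(1) by simp
    show "Re (h (\<lambda>x. c * w x) y) = cmod (h w y)" unfolding u(2) c(2) by simp
  qed
qed

text \<open>Mazur-type argument: the images \<open>h ` C m\<close> have a norm-convergent selection, and since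
  the preimages tend to \<open>0\<close>, closedness forces its limit to be \<open>h 0 = 0\<close>.\<close>

lemma closed_operator_null_selection:
  assumes co: "closed_operator D h"
    and C_D: "\<And>m. C m \<subseteq> D" and C_nonempty: "\<And>m. C m \<noteq> {}"
    and C_decreasing: "\<And>m m'. m \<le> m' \<Longrightarrow> C m' \<subseteq> C m"
    and C_midpt: "\<And>m u v. u \<in> C m \<Longrightarrow> v \<in> C m \<Longrightarrow> midpt u v \<in> C m"
    and C_small: "\<And>m u. u \<in> C m \<Longrightarrow> l2norm u \<le> inverse (real (Suc m))"
    and C_bounded: "\<And>m u. u \<in> C m \<Longrightarrow> l2norm (h u) \<le> K"
  obtains u where "\<And>m. u m \<in> C m" "(\<lambda>n. l2norm (h (u n))) \<longlonglongrightarrow> 0"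
proof -
  obtain s \<eta> where s: "\<And>m. s m \<in> h ` C m" and \<eta>: "\<eta> \<in> ell2"
    and s_tendsto: "(\<lambda>n. l2norm (\<lambda>x. s n x - \<eta> x)) \<longlonglongrightarrow> 0"
  proof (rule nested_midpoint_closed_Cauchy_selection)
    show "h ` C m \<subseteq> ell2" for m using closed_operator_ell2[OF co] C_D by blast
    show "h ` C m \<noteq> {}" for m using C_nonempty by blast
    show "h ` C m' \<subseteq> h ` C m" if "m \<le> m'" for m m' using C_decreasing[OF that] by blast
    show "midpt u v \<in> h ` C m" if u: "u \<in> h ` C m" and v: "v \<in> h ` C m" for m u v
    proof -
      obtain u' v' where uv': "u' \<in> C m" "v' \<in> C m" "u = h u'" "v = h v'" using u v by blast
      then have "h (midpt u' v') = midpt u v" using closed_operator_midpt[OF co] C_D by blast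
      then show ?thesis by (rule image_eqI[OF sym C_midpt[OF uv'(1,2)]])
    qed
    show "l2norm u \<le> K" if "u \<in> h ` C m" for m u using that C_bounded by blast
  qed (rule that)
  have "\<forall>m. \<exists>u. u \<in> C m \<and> s m = h u" using s by blast
  then obtain u where u: "\<And>m. u m \<in> C m" and s_eq: "\<And>m. s m = h (u m)" by metis
  have "(\<lambda>n. l2norm (\<lambda>x. u n x - 0)) \<longlonglongrightarrow> 0"
    by (rule tendsto_sandwich[OF _ _ tendsto_const LIMSEQ_inverse_real_of_nat])
      (use u C_small in \<open>auto simp: l2norm_nonneg\<close>)
  moreover have "(\<lambda>n. l2norm (\<lambda>x. h (u n) x - \<eta> x)) \<longlonglongrightarrow> 0" using s_tendsto by (simp add: s_eq)
  moreover have "u n \<in> D" for n using u C_D by blast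
  ultimately have "(\<lambda>x. 0) \<in> D \<and> h (\<lambda>x. 0) = \<eta>"
    using closed_operator_graph_closed[OF co _ ell2_zero(1) \<eta>] by blast
  then have "\<eta> = (\<lambda>x. 0)" using closed_operator_apply_zero[OF co] by simp
  with s_tendsto have "(\<lambda>n. l2norm (h (u n))) \<longlonglongrightarrow> 0" by (simp add: s_eq)
  with u show ?thesis by (rule that)
qed

text \<open>This is the weak closedness of the graph of a closed operator: otherwise, after rotating
  the \<open>w n\<close>, the sets \<open>C m\<close> below are nonempty, and the null selection contradicts
  \<open>Re (h u y) \<ge> \<epsilon>\<close>.\<close>

lemma closed_operator_pointwise_tendsto_zero:
  assumes co: "closed_operator D h"
    and w: "\<And>n. w n \<in> D" and w_tendsto: "(\<lambda>n. l2norm (w n)) \<longlonglongrightarrow> 0"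
    and hw_bounded: "\<And>n. l2norm (h (w n)) \<le> K"
  shows "(\<lambda>n. h (w n) y) \<longlonglongrightarrow> 0"
proof (rule ccontr)
  assume "\<not> (\<lambda>n. h (w n) y) \<longlonglongrightarrow> 0"
  then obtain \<epsilon> where \<epsilon>: "\<epsilon> > 0" "\<And>M. \<exists>n\<ge>M. \<epsilon> \<le> cmod (h (w n) y)"
    unfolding LIMSEQ_iff by (force simp: not_less)
  define C where "C m = {u \<in> D. l2norm u \<le> inverse (real (Suc m)) \<and> l2norm (h u) \<le> K \<and> \<epsilon> \<le> Re (h u y)}"
    for m
  have C_nonempty: "C m \<noteq> {}" for m
  proof -
    obtain M where "\<forall>n\<ge>M. l2norm (w n) < inverse (real (Suc m))"
      using LIMSEQ_D[OF w_tendsto, of "inverse (real (Suc m))"] by (auto simp: l2norm_nonneg)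
    then obtain n where n: "l2norm (w n) \<le> inverse (real (Suc m))" "\<epsilon> \<le> cmod (h (w n) y)"
      using \<epsilon>(2)[of M] by (meson less_imp_le)
    obtain u where "u \<in> D" "l2norm u = l2norm (w n)" "l2norm (h u) = l2norm (h (w n))"
      "Re (h u y) = cmod (h (w n) y)"
      by (rule closed_operator_rotate[OF co w])
    with n hw_bounded[of n] have "u \<in> C m" unfolding C_def by simp
    then show ?thesis by blast
  qed
  have C_decreasing: "C m' \<subseteq> C m" if "m \<le> m'" for m m'
  proof -
    have "inverse (real (Suc m')) \<le> inverse (real (Suc m))" using that by (simp add: le_imp_inverse_le)
    then show ?thesis unfolding C_def by (blast intro: order_trans)
  qed
  have C_midpt: "midpt u v \<in> C m" if "u \<in> C m" "v \<in> C m" for u v m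
  proof -
    have uv: "u \<in> D" "v \<in> D" using that unfolding C_def by auto
    note mid = closed_operator_midpt[OF co uv]
    have "l2norm (midpt u v) \<le> (l2norm u + l2norm v) / 2"
      by (rule l2norm_midpt(3)) (use closed_operator_dom_ell2[OF co] uv in auto)
    moreover have "l2norm (midpt (h u) (h v)) \<le> (l2norm (h u) + l2norm (h v)) / 2"
      by (rule l2norm_midpt(3)) (use closed_operator_ell2[OF co] uv in auto)
    ultimately show ?thesis using that mid unfolding C_def by auto
  qed
  obtain u where u: "\<And>m. u m \<in> C m" and hu_tendsto: "(\<lambda>n. l2norm (h (u n))) \<longlonglongrightarrow> 0"
    by (rule closed_operator_null_selection[OF co _ C_nonempty C_decreasing C_midpt])
      (auto simp: C_def)
  from LIMSEQ_D[OF hu_tendsto \<epsilon>(1)] obtain N where "\<forall>n\<ge>N. norm (l2norm (h (u n)) - 0) < \<epsilon>"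
    by blast
  then have "l2norm (h (u N)) < \<epsilon>" by (simp add: abs_of_nonneg[OF l2norm_nonneg])
  moreover have "cmod (h (u N) y) \<le> l2norm (h (u N))"
    using u[of N] unfolding C_def by (intro norm_le_l2norm closed_operator_ell2[OF co]) simp
  moreover have "\<epsilon> \<le> cmod (h (u N) y)"
    using u[of N] complex_Re_le_cmod[of "h (u N) y"] unfolding C_def by auto
  ultimately show False by linarith
qed

section \<open>Partial translations and their commutators\<close>

lemma partial_r_translation_imp_partial_translation:
  "partial_r_translation r A f \<Longrightarrow> partial_translation A f"
  unfolding partial_r_translation_def partial_translation_def by blast

lemma partial_r_translation_subset:
  "partial_r_translation r A f \<Longrightarrow> B \<subseteq> A \<Longrightarrow> partial_r_translation r B f"
  unfolding partial_r_translation_def by (auto intro: inj_on_subset)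

lemma partial_translation_inj_on: "partial_translation A f \<Longrightarrow> inj_on f A"
  unfolding partial_translation_def by blast

lemma domain_invariantD: "domain_invariant D \<Longrightarrow> partial_translation A f \<Longrightarrow> \<xi> \<in> D \<Longrightarrow> vf A f \<xi> \<in> D"
  unfolding domain_invariant_def by blast

lemma vf_cong: "(\<And>x. x \<in> A \<Longrightarrow> f x = g x) \<Longrightarrow> vf A f = vf A g"
proof -
  assume eq: "\<And>x. x \<in> A \<Longrightarrow> f x = g x"
  then have image: "f ` A = g ` A" by auto
  have inverse: "the_inv_into A f y = the_inv_into A g y" for y
    unfolding the_inv_into_def by (rule arg_cong[where f = The]) (use eq in auto)
  show ?thesis unfolding vf_def image inverse ..
qed

lemma vf_Un:
  assumes inj: "inj_on f (A1 \<union> A2)" and disjoint: "A1 \<inter> A2 = {}"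
  shows "vf (A1 \<union> A2) f \<xi> = (\<lambda>y. vf A1 f \<xi> y + vf A2 f \<xi> y)"
proof
  fix y
  have inj1: "inj_on f A1" and inj2: "inj_on f A2" using inj by (auto intro: inj_on_subset)
  show "vf (A1 \<union> A2) f \<xi> y = vf A1 f \<xi> y + vf A2 f \<xi> y"
  proof (cases "y \<in> f ` (A1 \<union> A2)")
    case False
    then show ?thesis unfolding vf_def by auto
  next
    case True
    then obtain x where x: "x \<in> A1 \<union> A2" "y = f x" by auto
    consider "x \<in> A1" "y \<notin> f ` A2" | "x \<in> A2" "y \<notin> f ` A1"
      using x inj disjoint unfolding inj_on_def by blast
    then show ?thesis
    proof cases
      case 1
      then show ?thesis unfolding vf_def
        using x the_inv_into_f_f[OF inj x(1)] the_inv_into_f_f[OF inj1] by auto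
    next
      case 2
      then show ?thesis unfolding vf_def
        using x the_inv_into_f_f[OF inj x(1)] the_inv_into_f_f[OF inj2] by auto
    qed
  qed
qed

lemma sum_sqmod_vf:
  assumes inj: "inj_on g A" and H: "finite H"
  shows "finite {x\<in>A. g x \<in> H}" "sum (sqmod (vf A g \<xi>)) H = sum (sqmod \<xi>) {x\<in>A. g x \<in> H}"
proof -
  have preimage: "{x\<in>A. g x \<in> H} = the_inv_into A g ` {y\<in>H. y \<in> g ` A}"
  proof
    show "{x\<in>A. g x \<in> H} \<subseteq> the_inv_into A g ` {y\<in>H. y \<in> g ` A}"
      using the_inv_into_f_f[OF inj] by (auto intro!: image_eqI)
    show "the_inv_into A g ` {y\<in>H. y \<in> g ` A} \<subseteq> {x\<in>A. g x \<in> H}"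
      using the_inv_into_into[OF inj] f_the_inv_into_f[OF inj] by auto
  qed
  show "finite {x\<in>A. g x \<in> H}" unfolding preimage using H by simp
  have inj_inv: "inj_on (the_inv_into A g) {y\<in>H. y \<in> g ` A}"
    using inj_on_the_inv_into[OF inj] by (rule inj_on_subset) auto
  have "sum (sqmod (vf A g \<xi>)) H = sum (\<lambda>y. if y \<in> g ` A then sqmod \<xi> (the_inv_into A g y) else 0) H"
    unfolding vf_def by (intro sum.cong) auto
  also have "\<dots> = sum (\<lambda>y. sqmod \<xi> (the_inv_into A g y)) {y\<in>H. y \<in> g ` A}"
    using H by (simp add: sum.inter_filter)
  also have "\<dots> = sum (sqmod \<xi>) {x\<in>A. g x \<in> H}"
    unfolding preimage using sum.reindex[OF inj_inv, of "sqmod \<xi>"] by simp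
  finally show "sum (sqmod (vf A g \<xi>)) H = sum (sqmod \<xi>) {x\<in>A. g x \<in> H}" .
qed

lemma vf_ell2:
  assumes inj: "inj_on g A" and \<xi>: "\<xi> \<in> ell2"
  shows "vf A g \<xi> \<in> ell2" "l2norm (vf A g \<xi>) \<le> l2norm \<xi>"
proof -
  have sums: "sum (sqmod (vf A g \<xi>)) H \<le> (l2norm \<xi>)\<^sup>2" if "finite H" for H
    using sum_sqmod_vf[OF inj that] sum_sqmod_le_l2norm[OF \<xi>] by simp
  from sums l2norm_nonneg show "vf A g \<xi> \<in> ell2" by (rule ell2_finite_sums_bounded)
  from sums l2norm_nonneg show "l2norm (vf A g \<xi>) \<le> l2norm \<xi>" by (rule ell2_finite_sums_bounded)
qed

definition commutator ::
    "(('a \<Rightarrow> complex) \<Rightarrow> ('a \<Rightarrow> complex)) \<Rightarrow> 'a set \<Rightarrow> ('a \<Rightarrow> 'a) \<Rightarrow> ('a \<Rightarrow> complex) \<Rightarrow> ('a \<Rightarrow> complex)"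
  where "commutator h A f \<xi> = (\<lambda>x. h (vf A f \<xi>) x - vf A f (h \<xi>) x)"

lemma comm_norm_eq_SUP_commutator:
  "comm_norm D h A f = (SUP \<xi>\<in>{\<xi>\<in>D. l2norm \<xi> \<le> 1}. ennreal (l2norm (commutator h A f \<xi>)))"
  unfolding comm_norm_def commutator_def ..

lemma l2norm_commutator_le_comm_norm:
  "\<xi> \<in> D \<Longrightarrow> l2norm \<xi> \<le> 1 \<Longrightarrow> ennreal (l2norm (commutator h A f \<xi>)) \<le> comm_norm D h A f"
  unfolding comm_norm_eq_SUP_commutator by (rule SUP_upper) simp

lemma comm_norm_cong: "(\<And>x. x \<in> A \<Longrightarrow> f x = g x) \<Longrightarrow> comm_norm D h A f = comm_norm D h A g"
  unfolding comm_norm_def using vf_cong by metis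

lemma commutator_ell2:
  assumes co: "closed_operator D h" and inv: "domain_invariant D"
    and pt: "partial_translation A f" and \<xi>: "\<xi> \<in> D"
  shows "commutator h A f \<xi> \<in> ell2"
  unfolding commutator_def
  using closed_operator_ell2[OF co domain_invariantD[OF inv pt \<xi>]]
    vf_ell2(1)[OF partial_translation_inj_on[OF pt] closed_operator_ell2[OF co \<xi>]]
  by (rule ell2_diff(1))

lemma commutator_Un:
  assumes co: "closed_operator D h" and inv: "domain_invariant D"
    and pt: "partial_translation (A1 \<union> A2) f" and disjoint: "A1 \<inter> A2 = {}" and \<xi>: "\<xi> \<in> D"
  shows "commutator h (A1 \<union> A2) f \<xi> = (\<lambda>y. commutator h A1 f \<xi> y + commutator h A2 f \<xi> y)"
proof -
  have pt1: "partial_translation A1 f" and pt2: "partial_translation A2 f"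
    using pt unfolding partial_translation_def by (auto intro: inj_on_subset)
  note split = vf_Un[OF partial_translation_inj_on[OF pt] disjoint]
  have "h (vf (A1 \<union> A2) f \<xi>) = (\<lambda>x. h (vf A1 f \<xi>) x + h (vf A2 f \<xi>) x)"
    unfolding split
    using closed_operator_add[OF co domain_invariantD[OF inv pt1 \<xi>] domain_invariantD[OF inv pt2 \<xi>]]
    by blast
  then show ?thesis unfolding commutator_def split[of "h \<xi>"] by (auto simp: algebra_simps)
qed

lemma comm_norm_le_add:
  assumes "\<And>\<xi>. \<xi> \<in> D \<Longrightarrow> l2norm \<xi> \<le> 1 \<Longrightarrow>
    l2norm (commutator h A f \<xi>) \<le> l2norm (commutator h B g \<xi>) + l2norm (commutator h C k \<xi>)"
  shows "comm_norm D h A f \<le> comm_norm D h B g + comm_norm D h C k"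
  unfolding comm_norm_eq_SUP_commutator[of D h A f]
proof (rule SUP_least)
  fix \<xi> assume "\<xi> \<in> {\<xi> \<in> D. l2norm \<xi> \<le> 1}"
  then have \<xi>: "\<xi> \<in> D" "l2norm \<xi> \<le> 1" by auto
  have "ennreal (l2norm (commutator h A f \<xi>))
      \<le> ennreal (l2norm (commutator h B g \<xi>)) + ennreal (l2norm (commutator h C k \<xi>))"
    using ennreal_leI[OF assms[OF \<xi>]] by (simp add: ennreal_plus l2norm_nonneg)
  also have "\<dots> \<le> comm_norm D h B g + comm_norm D h C k"
    using \<xi> by (intro add_mono l2norm_commutator_le_comm_norm)
  finally show "ennreal (l2norm (commutator h A f \<xi>)) \<le> comm_norm D h B g + comm_norm D h C k" .
qed

lemma comm_norm_Un_le:
  assumes co: "closed_operator D h" and inv: "domain_invariant D"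
    and pt: "partial_translation (A1 \<union> A2) f" and disjoint: "A1 \<inter> A2 = {}"
  shows "comm_norm D h (A1 \<union> A2) f \<le> comm_norm D h A1 f + comm_norm D h A2 f"
proof (rule comm_norm_le_add)
  have pt1: "partial_translation A1 f" and pt2: "partial_translation A2 f"
    using pt unfolding partial_translation_def by (auto intro: inj_on_subset)
  fix \<xi> assume \<xi>: "\<xi> \<in> D"
  show "l2norm (commutator h (A1 \<union> A2) f \<xi>) \<le> l2norm (commutator h A1 f \<xi>) + l2norm (commutator h A2 f \<xi>)"
    unfolding commutator_Un[OF co inv pt disjoint \<xi>]
    by (rule ell2_add(2)[OF commutator_ell2[OF co inv pt1 \<xi>] commutator_ell2[OF co inv pt2 \<xi>]])
qed

lemma comm_norm_le_Un_add:
  assumes co: "closed_operator D h" and inv: "domain_invariant D"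
    and pt: "partial_translation (A1 \<union> A2) f" and disjoint: "A1 \<inter> A2 = {}"
  shows "comm_norm D h A1 f \<le> comm_norm D h (A1 \<union> A2) f + comm_norm D h A2 f"
proof (rule comm_norm_le_add)
  have pt2: "partial_translation A2 f"
    using pt unfolding partial_translation_def by (auto intro: inj_on_subset)
  fix \<xi> assume \<xi>: "\<xi> \<in> D"
  have "commutator h A1 f \<xi> = (\<lambda>y. commutator h (A1 \<union> A2) f \<xi> y - commutator h A2 f \<xi> y)"
    unfolding commutator_Un[OF co inv pt disjoint \<xi>] by simp
  then show "l2norm (commutator h A1 f \<xi>) \<le> l2norm (commutator h (A1 \<union> A2) f \<xi>) + l2norm (commutator h A2 f \<xi>)"
    using ell2_diff(2)[OF commutator_ell2[OF co inv pt \<xi>] commutator_ell2[OF co inv pt2 \<xi>]] by simp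
qed

section \<open>Agreement on balls\<close>

definition agree_on_ball :: "'a::metric_space \<Rightarrow> real \<Rightarrow> 'a set \<Rightarrow> ('a \<Rightarrow> 'a) \<Rightarrow> 'a set \<Rightarrow> ('a \<Rightarrow> 'a) \<Rightarrow> bool"
  where "agree_on_ball x0 R A f A' f' \<longleftrightarrow>
    (\<forall>x\<in>cball x0 R. (x \<in> A \<longleftrightarrow> x \<in> A') \<and> (x \<in> A \<longrightarrow> f x = f' x))"

lemma agree_on_ball_refl: "agree_on_ball x0 R A f A f"
  unfolding agree_on_ball_def by auto

lemma agree_on_ball_sym: "agree_on_ball x0 R A f A' f' \<Longrightarrow> agree_on_ball x0 R A' f' A f"
  unfolding agree_on_ball_def by auto

lemma agree_on_ball_trans:
  "agree_on_ball x0 R A f A' f' \<Longrightarrow> agree_on_ball x0 R A' f' A'' f'' \<Longrightarrow> agree_on_ball x0 R A f A'' f''"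
  unfolding agree_on_ball_def by auto

lemma agree_on_ball_mono: "agree_on_ball x0 R A f A' f' \<Longrightarrow> R' \<le> R \<Longrightarrow> agree_on_ball x0 R' A f A' f'"
  unfolding agree_on_ball_def by auto

lemma vf_eq_if_agree_on_ball:
  assumes pr: "partial_r_translation r A f" "partial_r_translation r A' f'"
    and agree: "agree_on_ball x0 R A f A' f'" and y: "dist x0 y + r \<le> R"
  shows "vf A' f' \<zeta> y = vf A f \<zeta> y"
proof -
  have preimage: "y \<in> g' ` B' \<and> the_inv_into B' g' y = the_inv_into B g y"
    if prB: "partial_r_translation r B g" "partial_r_translation r B' g'"
      and agreeB: "agree_on_ball x0 R B g B' g'" and "y \<in> g ` B" for B g B' g'
  proof -
    obtain x where x: "x \<in> B" "y = g x" using \<open>y \<in> g ` B\<close> by auto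
    have "dist x y \<le> r" using prB(1) x unfolding partial_r_translation_def by auto
    then have "dist x0 x \<le> R" using dist_triangle[of x0 x y] y by (simp add: dist_commute)
    then have x': "x \<in> B'" "g' x = g x" using agreeB x(1) unfolding agree_on_ball_def by auto
    have "inj_on g B" "inj_on g' B'" using prB unfolding partial_r_translation_def by auto
    then show ?thesis using x x' the_inv_into_f_f by (metis image_eqI)
  qed
  show ?thesis
  proof (cases "y \<in> f ` A")
    case True
    then show ?thesis using preimage[OF pr agree] unfolding vf_def by simp
  next
    case False
    then have "y \<notin> f' ` A'" using preimage[OF pr(2,1) agree_on_ball_sym[OF agree]] by blast
    with False show ?thesis unfolding vf_def by simp
  qed
qed

lemma power2_norm_diff_le: "(cmod (a - b))\<^sup>2 \<le> 2 * (cmod a)\<^sup>2 + 2 * (cmod b)\<^sup>2"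
proof -
  have "(cmod (a - b))\<^sup>2 \<le> (cmod a + cmod b)\<^sup>2"
    by (rule power_mono[OF norm_triangle_ineq4]) simp
  moreover have "(cmod a + cmod b)\<^sup>2 \<le> 2 * (cmod a)\<^sup>2 + 2 * (cmod b)\<^sup>2"
    using zero_le_power2[of "cmod a - cmod b"] by (simp add: power2_eq_square algebra_simps)
  ultimately show ?thesis by linarith
qed

lemma sum_sqmod_vf_far_le:
  assumes pr: "partial_r_translation r B g" and H: "finite H"
    and far: "\<And>y. y \<in> H \<Longrightarrow> R + r < dist x0 y"
    and G: "\<And>x. x \<in> G \<Longrightarrow> dist x0 x \<le> R"
    and tail: "\<And>H'. finite H' \<Longrightarrow> H' \<inter> G = {} \<Longrightarrow> sum (sqmod \<xi>) H' \<le> e"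
  shows "sum (sqmod (vf B g \<xi>)) H \<le> e"
proof -
  have inj: "inj_on g B" using pr unfolding partial_r_translation_def by auto
  have "{x\<in>B. g x \<in> H} \<inter> G = {}"
  proof (rule ccontr)
    assume "{x\<in>B. g x \<in> H} \<inter> G \<noteq> {}"
    then obtain x where x: "x \<in> B" "g x \<in> H" "x \<in> G" by auto
    have "dist x (g x) \<le> r" using pr x(1) unfolding partial_r_translation_def by auto
    then show False using dist_triangle[of x0 "g x" x] far[OF x(2)] G[OF x(3)] by linarith
  qed
  then show ?thesis using sum_sqmod_vf(2)[OF inj H, of \<xi>] sum_sqmod_vf(1)[OF inj H] tail by simp
qed

lemma vf_tendsto_if_agree_on_ball:
  assumes pr: "partial_r_translation r A f" and prn: "\<And>n. partial_r_translation r (An n) (fn n)"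
    and agree: "\<And>n. agree_on_ball x0 (real n) A f (An n) (fn n)" and \<xi>: "\<xi> \<in> ell2"
  shows "(\<lambda>n. l2norm (\<lambda>y. vf (An n) (fn n) \<xi> y - vf A f \<xi> y)) \<longlonglongrightarrow> 0"
proof (rule LIMSEQ_zero_if_eventually_le)
  fix e :: real assume "e > 0"
  then obtain G where G: "finite G" "\<And>H. finite H \<Longrightarrow> H \<inter> G = {} \<Longrightarrow> sum (sqmod \<xi>) H \<le> e\<^sup>2 / 4"
    using ell2_small_tail[OF \<xi>, of "e\<^sup>2 / 4"] by auto
  obtain R where R: "\<And>x. x \<in> G \<Longrightarrow> dist x0 x \<le> R"
    using finite_imp_bounded[OF G(1)] bounded_any_center by metis
  have "l2norm (\<lambda>y. vf (An n) (fn n) \<xi> y - vf A f \<xi> y) \<le> e" if n: "R + 2 * r \<le> real n" for n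
  proof -
    let ?d = "\<lambda>y. vf (An n) (fn n) \<xi> y - vf A f \<xi> y"
    have "sum (sqmod ?d) H \<le> e\<^sup>2" if H: "finite H" for H
    proof -
      define H' where "H' = {y\<in>H. R + r < dist x0 y}"
      have H': "finite H'" "\<And>y. y \<in> H' \<Longrightarrow> R + r < dist x0 y" using H unfolding H'_def by auto
      have "sum (sqmod ?d) H = sum (sqmod ?d) H'"
      proof (rule sum.mono_neutral_right[OF H])
        show "\<forall>y\<in>H - H'. sqmod ?d y = 0"
          using vf_eq_if_agree_on_ball[OF pr prn agree] n unfolding H'_def by force
      qed (auto simp: H'_def)
      also have "\<dots> \<le> sum (\<lambda>y. 2 * sqmod (vf (An n) (fn n) \<xi>) y + 2 * sqmod (vf A f \<xi>) y) H'"
        by (rule sum_mono) (rule power2_norm_diff_le)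
      also have "\<dots> = 2 * sum (sqmod (vf (An n) (fn n) \<xi>)) H' + 2 * sum (sqmod (vf A f \<xi>)) H'"
        by (simp add: sum.distrib sum_distrib_left)
      also have "\<dots> \<le> 2 * (e\<^sup>2 / 4) + 2 * (e\<^sup>2 / 4)"
      proof -
        have "sum (sqmod (vf B g \<xi>)) H' \<le> e\<^sup>2 / 4" if "partial_r_translation r B g" for B g
          using that H' R G(2) by (rule sum_sqmod_vf_far_le)
        from this[OF prn[of n]] this[OF pr] show ?thesis by linarith
      qed
      finally show ?thesis by simp
    qed
    with \<open>e > 0\<close> show ?thesis using ell2_finite_sums_bounded(2)[of ?d e] by simp
  qed
  then show "\<exists>N. \<forall>n\<ge>N. 0 \<le> l2norm (\<lambda>y. vf (An n) (fn n) \<xi> y - vf A f \<xi> y)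
      \<and> l2norm (\<lambda>y. vf (An n) (fn n) \<xi> y - vf A f \<xi> y) \<le> e"
    by (intro exI[of _ "nat \<lceil>R + 2 * r\<rceil>"]) (auto simp: l2norm_nonneg)
qed

text \<open>Here \<open>v\<^sub>f\<^sub>n \<xi> \<rightarrow> v\<^sub>f \<xi>\<close> in norm while \<open>h v\<^sub>f\<^sub>n \<xi>\<close> stays bounded, so the closedness of \<open>h\<close>
  gives pointwise convergence of \<open>h v\<^sub>f\<^sub>n \<xi>\<close>.\<close>

lemma h_vf_pointwise_tendsto_if_agree_on_ball:
  assumes co: "closed_operator D h" and inv: "domain_invariant D"
    and pr: "partial_r_translation r A f" and prn: "\<And>n. partial_r_translation r (An n) (fn n)"
    and agree: "\<And>n. agree_on_ball x0 (real n) A f (An n) (fn n)" and \<xi>: "\<xi> \<in> D"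
    and bounded: "\<And>n. l2norm (commutator h (An n) (fn n) \<xi>) \<le> M"
  shows "(\<lambda>n. h (vf (An n) (fn n) \<xi>) y) \<longlonglongrightarrow> h (vf A f \<xi>) y"
proof -
  have pt: "partial_translation A f" and ptn: "\<And>n. partial_translation (An n) (fn n)"
    using pr prn by (auto intro: partial_r_translation_imp_partial_translation)
  define a where "a n = vf (An n) (fn n) \<xi>" for n
  define a0 where "a0 = vf A f \<xi>"
  have aD: "a n \<in> D" for n unfolding a_def by (rule domain_invariantD[OF inv ptn \<xi>])
  have a0D: "a0 \<in> D" unfolding a0_def by (rule domain_invariantD[OF inv pt \<xi>])
  define w where "w n = (\<lambda>y. a n y - a0 y)" for n
  have wD: "w n \<in> D" and hw: "h (w n) = (\<lambda>y. h (a n) y - h a0 y)" for n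
    using closed_operator_diff[OF co aD a0D] unfolding w_def by auto
  have w_tendsto: "(\<lambda>n. l2norm (w n)) \<longlonglongrightarrow> 0"
    unfolding w_def a_def a0_def
    by (rule vf_tendsto_if_agree_on_ball[OF pr prn agree closed_operator_dom_ell2[OF co \<xi>]])
  have h\<xi>: "h \<xi> \<in> ell2" by (rule closed_operator_ell2[OF co \<xi>])
  have ha_bounded: "l2norm (h (a n)) \<le> M + l2norm (h \<xi>)" for n
  proof -
    have "h (a n) = (\<lambda>y. commutator h (An n) (fn n) \<xi> y + vf (An n) (fn n) (h \<xi>) y)"
      unfolding commutator_def a_def by simp
    then have "l2norm (h (a n)) \<le> l2norm (commutator h (An n) (fn n) \<xi>) + l2norm (vf (An n) (fn n) (h \<xi>))"
      using ell2_add(2)[OF commutator_ell2[OF co inv ptn \<xi>] vf_ell2(1)[OF partial_translation_inj_on[OF ptn] h\<xi>]]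
      by simp
    then show ?thesis
      using bounded[of n] vf_ell2(2)[OF partial_translation_inj_on[OF ptn] h\<xi>, of n] by linarith
  qed
  have "l2norm (h (w n)) \<le> M + l2norm (h \<xi>) + l2norm (h a0)" for n
    unfolding hw using ell2_diff(2)[OF closed_operator_ell2[OF co aD] closed_operator_ell2[OF co a0D], of n]
      ha_bounded[of n] by linarith
  then have "(\<lambda>n. h (w n) y) \<longlonglongrightarrow> 0"
    by (rule closed_operator_pointwise_tendsto_zero[OF co wD w_tendsto])
  then have "(\<lambda>n. h (w n) y + h a0 y) \<longlonglongrightarrow> 0 + h a0 y" by (intro tendsto_add tendsto_const)
  then show ?thesis unfolding hw a_def a0_def by simp
qed

lemma l2norm_commutator_le_if_agree_on_ball:
  assumes co: "closed_operator D h" and inv: "domain_invariant D"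
    and pr: "partial_r_translation r A f" and prn: "\<And>n. partial_r_translation r (An n) (fn n)"
    and agree: "\<And>n. agree_on_ball x0 (real n) A f (An n) (fn n)" and \<xi>: "\<xi> \<in> D"
    and bounded: "\<And>n. l2norm (commutator h (An n) (fn n) \<xi>) \<le> M"
  shows "l2norm (commutator h A f \<xi>) \<le> M"
proof (rule ell2_pointwise_limit(2))
  show "commutator h (An n) (fn n) \<xi> \<in> ell2" for n
    using commutator_ell2[OF co inv partial_r_translation_imp_partial_translation[OF prn] \<xi>] .
  show "l2norm (commutator h (An n) (fn n) \<xi>) \<le> M" for n by (rule bounded)
  show "(\<lambda>n. commutator h (An n) (fn n) \<xi> y) \<longlonglongrightarrow> commutator h A f \<xi> y" for y
  proof -
    have "\<forall>\<^sub>F n in sequentially. vf (An n) (fn n) (h \<xi>) y = vf A f (h \<xi>) y"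
      unfolding eventually_sequentially
    proof (intro exI allI impI)
      fix n assume "nat \<lceil>dist x0 y + r\<rceil> \<le> n"
      then have "dist x0 y + r \<le> real n" by linarith
      then show "vf (An n) (fn n) (h \<xi>) y = vf A f (h \<xi>) y" by (rule vf_eq_if_agree_on_ball[OF pr prn agree])
    qed
    then have "(\<lambda>n. vf (An n) (fn n) (h \<xi>) y) \<longlonglongrightarrow> vf A f (h \<xi>) y" by (rule tendsto_eventually)
    with h_vf_pointwise_tendsto_if_agree_on_ball[OF co inv pr prn agree \<xi> bounded]
    show ?thesis unfolding commutator_def by (rule tendsto_diff)
  qed
qed

lemma l2norm_commutator_gt_if_agree_on_ball:
  assumes co: "closed_operator D h" and inv: "domain_invariant D"
    and pr: "partial_r_translation r A f" and \<xi>: "\<xi> \<in> D" and gt: "M < l2norm (commutator h A f \<xi>)"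
  obtains n :: nat where "\<And>A' f'. partial_r_translation r A' f' \<Longrightarrow> agree_on_ball x0 (real n) A f A' f' \<Longrightarrow>
    M < l2norm (commutator h A' f' \<xi>)"
proof (rule ccontr)
  assume "\<not> thesis"
  then have "\<forall>n::nat. \<exists>A' f'. partial_r_translation r A' f' \<and> agree_on_ball x0 (real n) A f A' f' \<and>
      l2norm (commutator h A' f' \<xi>) \<le> M"
    using that by (meson not_less)
  then obtain An fn where prn: "\<And>n. partial_r_translation r (An n) (fn n)"
    and agree: "\<And>n. agree_on_ball x0 (real n) A f (An n) (fn n)"
    and bounded: "\<And>n. l2norm (commutator h (An n) (fn n) \<xi>) \<le> M"
    by metis
  from l2norm_commutator_le_if_agree_on_ball[OF co inv pr prn agree \<xi> bounded] gt show False by simp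
qed

section \<open>Unbounded commutators on partial \<open>r\<close>-translations\<close>

text \<open>Up to their values off the domain, there are only finitely many partial \<open>r\<close>-translations
  with domain in a finite set \<open>F\<close>: they map \<open>F\<close> into its finite \<open>r\<close>-neighbourhood.\<close>

lemma comm_norm_bounded_on_finite_set:
  fixes F :: "'a::metric_space set"
  assumes coarse: "\<And>A f. partial_translation A f \<Longrightarrow> comm_norm D h A f < \<infinity>"
    and F: "finite F" and balls: "\<And>x::'a. finite (cball x r)"
  obtains K where "K < \<infinity>" "\<And>B g. B \<subseteq> F \<Longrightarrow> partial_r_translation r B g \<Longrightarrow> comm_norm D h B g \<le> K"
proof -
  define F' where "F' = (\<Union>x\<in>F. cball x r)"
  have "finite F'" unfolding F'_def using F balls by blast
  define P where "P = {(B, restrict g B) | B g. B \<subseteq> F \<and> partial_r_translation r B g}"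
  have "P \<subseteq> Pow F \<times> PiE F (\<lambda>_. insert undefined F')"
  proof
    fix p assume "p \<in> P"
    then obtain B g where p: "p = (B, restrict g B)" "B \<subseteq> F" "partial_r_translation r B g"
      unfolding P_def by blast
    have "g x \<in> F'" if "x \<in> B" for x
      using p(2,3) that unfolding F'_def partial_r_translation_def by auto
    with p show "p \<in> Pow F \<times> PiE F (\<lambda>_. insert undefined F')"
      unfolding PiE_def Pi_def extensional_def by auto
  qed
  then have "finite P" by (rule finite_subset) (use F \<open>finite F'\<close> in \<open>auto intro!: finite_PiE\<close>)
  define K where "K = (\<Sum>p\<in>P. comm_norm D h (fst p) (snd p))"
  have restrict: "comm_norm D h B (restrict g B) = comm_norm D h B g" for B g
    by (rule comm_norm_cong) simp
  have "comm_norm D h (fst p) (snd p) < \<infinity>" if p: "p \<in> P" for p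
  proof -
    obtain B g where "p = (B, restrict g B)" "partial_r_translation r B g" using p unfolding P_def by blast
    then show ?thesis using coarse[OF partial_r_translation_imp_partial_translation] restrict by simp
  qed
  then have "K < \<infinity>" unfolding K_def using \<open>finite P\<close> by (simp add: ennreal_sum_less_top)
  moreover have "comm_norm D h B g \<le> K" if "B \<subseteq> F" "partial_r_translation r B g" for B g
  proof -
    have "(B, restrict g B) \<in> P" using that unfolding P_def by blast
    then have "comm_norm D h B (restrict g B) \<le> K"
      unfolding K_def using member_le_sum[of _ P "\<lambda>p. comm_norm D h (fst p) (snd p)"] \<open>finite P\<close> by fastforce
    then show ?thesis unfolding restrict .
  qed
  ultimately show ?thesis by (rule that)
qed

text \<open>Patching: use \<open>(A0, f0)\<close> inside \<open>F\<close> and \<open>(A, f)\<close> outside, dropping the points outside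
  \<open>F\<close> whose image under \<open>f\<close> would collide with the image of \<open>A0 \<inter> F\<close>.\<close>

definition patch_domain :: "'a set \<Rightarrow> 'a set \<Rightarrow> ('a \<Rightarrow> 'a) \<Rightarrow> 'a set \<Rightarrow> ('a \<Rightarrow> 'a) \<Rightarrow> 'a set" where
  "patch_domain F A0 f0 A f = A0 \<inter> F \<union> {x \<in> A - F. f x \<notin> f0 ` (A0 \<inter> F)}"

definition patch_map :: "'a set \<Rightarrow> ('a \<Rightarrow> 'a) \<Rightarrow> ('a \<Rightarrow> 'a) \<Rightarrow> 'a \<Rightarrow> 'a" where
  "patch_map F f0 f x = (if x \<in> F then f0 x else f x)"

lemma partial_r_translation_patch:
  assumes pr0: "partial_r_translation r A0 f0" and pr: "partial_r_translation r A f"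
  shows "partial_r_translation r (patch_domain F A0 f0 A f) (patch_map F f0 f)"
proof -
  define A1 where "A1 = {x \<in> A - F. f x \<notin> f0 ` (A0 \<inter> F)}"
  let ?g = "patch_map F f0 f"
  have "inj_on ?g (A0 \<inter> F) \<longleftrightarrow> inj_on f0 (A0 \<inter> F)"
    by (rule inj_on_cong) (simp add: patch_map_def)
  moreover have "inj_on ?g A1 \<longleftrightarrow> inj_on f A1"
    by (rule inj_on_cong) (simp add: patch_map_def A1_def)
  moreover have "inj_on f0 (A0 \<inter> F)" "inj_on f A1"
    using pr0 pr unfolding partial_r_translation_def A1_def by (auto intro: inj_on_subset)
  moreover have "?g ` (A0 \<inter> F) = f0 ` (A0 \<inter> F)"
    by (rule image_cong) (simp_all add: patch_map_def)
  moreover have "?g ` A1 = f ` A1"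
    by (rule image_cong) (simp_all add: patch_map_def A1_def)
  moreover have "f0 ` (A0 \<inter> F) \<inter> f ` A1 = {}" unfolding A1_def by auto (metis IntI image_eqI)
  ultimately have "inj_on ?g (A0 \<inter> F \<union> A1)" unfolding inj_on_Un by blast
  moreover have "dist x (?g x) \<le> r" if "x \<in> A0 \<inter> F \<union> A1" for x
    using that pr0 pr unfolding partial_r_translation_def patch_map_def A1_def by auto
  ultimately show ?thesis unfolding partial_r_translation_def patch_domain_def A1_def by blast
qed

lemma agree_on_ball_patch:
  "agree_on_ball x0 R A0 f0 (patch_domain (cball x0 R) A0 f0 A f) (patch_map (cball x0 R) f0 f)"
  unfolding agree_on_ball_def patch_domain_def patch_map_def by auto

lemma comm_norm_le_patch:
  assumes co: "closed_operator D h" and inv: "domain_invariant D"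
    and pr0: "partial_r_translation r A0 f0" and pr: "partial_r_translation r A f"
  shows "comm_norm D h A f \<le> comm_norm D h (patch_domain F A0 f0 A f) (patch_map F f0 f)
    + comm_norm D h {x \<in> A. x \<in> F \<or> f x \<in> f0 ` (A0 \<inter> F)} f + comm_norm D h (A0 \<inter> F) f0"
proof -
  define A1 where "A1 = {x \<in> A - F. f x \<notin> f0 ` (A0 \<inter> F)}"
  define E where "E = {x \<in> A. x \<in> F \<or> f x \<in> f0 ` (A0 \<inter> F)}"
  let ?A' = "patch_domain F A0 f0 A f" and ?f' = "patch_map F f0 f"
  have A_split: "A = A1 \<union> E" "A1 \<inter> E = {}" unfolding A1_def E_def by auto
  have A'_split: "?A' = A1 \<union> (A0 \<inter> F)" "A1 \<inter> (A0 \<inter> F) = {}"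
    unfolding A1_def patch_domain_def by auto
  have pt: "partial_translation (A1 \<union> E) f"
    using pr A_split(1) by (simp add: partial_r_translation_imp_partial_translation)
  have pt': "partial_translation (A1 \<union> (A0 \<inter> F)) ?f'"
    using partial_r_translation_patch[OF pr0 pr, of F] A'_split(1)
    by (simp add: partial_r_translation_imp_partial_translation)
  have "comm_norm D h A f \<le> comm_norm D h A1 f + comm_norm D h E f"
    using comm_norm_Un_le[OF co inv pt A_split(2)] A_split(1) by simp
  also have "comm_norm D h A1 f = comm_norm D h A1 ?f'"
    by (rule comm_norm_cong) (simp add: A1_def patch_map_def)
  also have "\<dots> \<le> comm_norm D h ?A' ?f' + comm_norm D h (A0 \<inter> F) ?f'"
    using comm_norm_le_Un_add[OF co inv pt' A'_split(2)] A'_split(1) by simp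
  also have "comm_norm D h (A0 \<inter> F) ?f' = comm_norm D h (A0 \<inter> F) f0"
    by (rule comm_norm_cong) (simp add: patch_map_def)
  finally show ?thesis unfolding E_def by (simp add: ac_simps)
qed

lemma patch_defect_subset_cball:
  assumes pr0: "partial_r_translation r A0 f0" and pr: "partial_r_translation r A f" and r: "0 \<le> r"
  shows "{x \<in> A. x \<in> cball x0 R \<or> f x \<in> f0 ` (A0 \<inter> cball x0 R)} \<subseteq> cball x0 (R + 2 * r)"
proof
  fix x assume x: "x \<in> {x \<in> A. x \<in> cball x0 R \<or> f x \<in> f0 ` (A0 \<inter> cball x0 R)}"
  then consider "x \<in> cball x0 R" | z where "z \<in> A0" "z \<in> cball x0 R" "f x = f0 z" by auto
  then have "dist x0 x \<le> R + 2 * r"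
  proof cases
    case 1
    then show ?thesis using r by simp
  next
    case 2
    have "dist x (f x) \<le> r" "dist z (f0 z) \<le> r" "dist x0 z \<le> R"
      using x pr 2 pr0 unfolding partial_r_translation_def by auto
    then show ?thesis
      using dist_triangle[of x0 x z] dist_triangle[of z x "f x"] 2(3) by (simp add: dist_commute)
  qed
  then show "x \<in> cball x0 (R + 2 * r)" by simp
qed

text \<open>Since balls are finite, patching on a ball costs a bounded amount of commutator norm; so
  if the commutators of partial \<open>r\<close>-translations are unbounded, large ones can be found agreeing
  with any given partial \<open>r\<close>-translation on any given ball.\<close>

lemma exists_agreeing_large_comm_norm:
  fixes x0 :: "'a::metric_space" and D :: "('a \<Rightarrow> complex) set"
  assumes co: "closed_operator D h" and inv: "domain_invariant D"
    and coarse: "\<And>A f. partial_translation A f \<Longrightarrow> comm_norm D h A f < \<infinity>"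
    and balls: "\<And>(x::'a) R. finite (cball x R)" and r: "0 \<le> r"
    and unbounded: "(SUP (A, f)\<in>{(A, f). partial_r_translation r A f}. comm_norm D h A f) = \<infinity>"
    and pr0: "partial_r_translation r A0 f0"
  obtains A' f' where "partial_r_translation r A' f'" "agree_on_ball x0 R A0 f0 A' f'"
    "ennreal M < comm_norm D h A' f'"
proof -
  obtain K where K: "K < \<infinity>"
    "\<And>B g. B \<subseteq> cball x0 (R + 2 * r) \<Longrightarrow> partial_r_translation r B g \<Longrightarrow> comm_norm D h B g \<le> K"
    using comm_norm_bounded_on_finite_set[OF coarse balls balls] by blast
  have "ennreal M + K + K < (SUP (A, f)\<in>{(A, f). partial_r_translation r A f}. comm_norm D h A f)"
    unfolding unbounded using K(1) by simp
  then obtain A f where pr: "partial_r_translation r A f" and large: "ennreal M + K + K < comm_norm D h A f"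
    unfolding less_SUP_iff by auto
  let ?F = "cball x0 R"
  let ?E = "{x \<in> A. x \<in> ?F \<or> f x \<in> f0 ` (A0 \<inter> ?F)}"
  have E: "comm_norm D h ?E f \<le> K"
    using patch_defect_subset_cball[OF pr0 pr r] by (rule K(2)) (auto intro: partial_r_translation_subset[OF pr])
  have A0: "comm_norm D h (A0 \<inter> ?F) f0 \<le> K"
    by (rule K(2)) (use r in \<open>auto intro: partial_r_translation_subset[OF pr0]\<close>)
  let ?c = "comm_norm D h (patch_domain ?F A0 f0 A f) (patch_map ?F f0 f)"
  have "comm_norm D h A f \<le> ?c + comm_norm D h ?E f + comm_norm D h (A0 \<inter> ?F) f0"
    by (rule comm_norm_le_patch[OF co inv pr0 pr])
  also have "\<dots> \<le> ?c + K + K" using E A0 by (intro add_mono order_refl)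
  finally have bound: "comm_norm D h A f \<le> ?c + K + K" .
  have "ennreal M < ?c"
  proof (rule ccontr)
    assume "\<not> ennreal M < ?c"
    then have "?c + K + K \<le> ennreal M + K + K" by (intro add_right_mono) (simp add: not_less)
    with bound have "comm_norm D h A f \<le> ennreal M + K + K" by (rule order_trans)
    with large show False by (meson leD)
  qed
  with partial_r_translation_patch[OF pr0 pr] agree_on_ball_patch show ?thesis by (rule that)
qed

lemma exists_agreeing_robustly_large_comm_norm:
  fixes x0 :: "'a::metric_space" and D :: "('a \<Rightarrow> complex) set"
  assumes co: "closed_operator D h" and inv: "domain_invariant D"
    and coarse: "\<And>A f. partial_translation A f \<Longrightarrow> comm_norm D h A f < \<infinity>"
    and balls: "\<And>(x::'a) R. finite (cball x R)" and r: "0 \<le> r"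
    and unbounded: "(SUP (A, f)\<in>{(A, f). partial_r_translation r A f}. comm_norm D h A f) = \<infinity>"
    and pr0: "partial_r_translation r A0 f0" and M: "0 \<le> M"
  obtains R' A' f' where "R \<le> R'" "partial_r_translation r A' f'" "agree_on_ball x0 R A0 f0 A' f'"
    "\<And>A'' f''. partial_r_translation r A'' f'' \<Longrightarrow> agree_on_ball x0 R' A' f' A'' f'' \<Longrightarrow>
      ennreal M < comm_norm D h A'' f''"
proof -
  obtain A' f' where A': "partial_r_translation r A' f'" "agree_on_ball x0 R A0 f0 A' f'"
    and large: "ennreal M < comm_norm D h A' f'"
    by (rule exists_agreeing_large_comm_norm[OF co inv coarse balls r unbounded pr0])
  then obtain \<xi> where \<xi>: "\<xi> \<in> D" "l2norm \<xi> \<le> 1" "M < l2norm (commutator h A' f' \<xi>)"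
    unfolding comm_norm_eq_SUP_commutator less_SUP_iff by (auto simp: ennreal_less_iff[OF M])
  obtain n :: nat where n: "\<And>A'' f''. partial_r_translation r A'' f'' \<Longrightarrow>
      agree_on_ball x0 (real n) A' f' A'' f'' \<Longrightarrow> M < l2norm (commutator h A'' f'' \<xi>)"
    using l2norm_commutator_gt_if_agree_on_ball[OF co inv A'(1) \<xi>(1,3), of x0] by blast
  show ?thesis
  proof (rule that[OF _ A'])
    show "R \<le> max R (real n)" by simp
    fix A'' f'' assume "partial_r_translation r A'' f''" "agree_on_ball x0 (max R (real n)) A' f' A'' f''"
    then have "M < l2norm (commutator h A'' f'' \<xi>)" using n agree_on_ball_mono by (meson max.cobounded2)
    then have "ennreal M < ennreal (l2norm (commutator h A'' f'' \<xi>))" by (simp add: ennreal_less_iff[OF M])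
    also have "\<dots> \<le> comm_norm D h A'' f''" by (rule l2norm_commutator_le_comm_norm[OF \<xi>(1,2)])
    finally show "ennreal M < comm_norm D h A'' f''" .
  qed
qed

lemma agree_on_ball_chain:
  fixes R :: "nat \<Rightarrow> real"
  assumes R: "incseq R" and agree: "\<And>k. agree_on_ball x0 (R k) (A k) (f k) (A (Suc k)) (f (Suc k))"
    and "k \<le> j"
  shows "agree_on_ball x0 (R k) (A k) (f k) (A j) (f j)"
  using \<open>k \<le> j\<close>
proof (induction j rule: dec_induct)
  case base
  show ?case by (rule agree_on_ball_refl)
next
  case (step j)
  have "agree_on_ball x0 (R k) (A j) (f j) (A (Suc j)) (f (Suc j))"
    using agree_on_ball_mono[OF agree[of j]] incseqD[OF R step(1)] by blast
  with step(3) show ?case by (rule agree_on_ball_trans)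
qed

lemma agree_on_ball_chain_limit:
  fixes R :: "nat \<Rightarrow> real"
  assumes pr: "\<And>k. partial_r_translation r (A k) (f k)" and R: "incseq R"
    and agree: "\<And>k. agree_on_ball x0 (R k) (A k) (f k) (A (Suc k)) (f (Suc k))"
  obtains A_lim f_lim where "partial_r_translation r A_lim f_lim"
    "\<And>k. agree_on_ball x0 (R k) (A k) (f k) A_lim f_lim"
proof -
  define stage where "stage x = (LEAST k. dist x0 x \<le> R k)" for x
  define A_lim where "A_lim = {x. (\<exists>k. dist x0 x \<le> R k) \<and> x \<in> A (stage x)}"
  define f_lim where "f_lim x = f (stage x) x" for x
  have stage_reaches: "dist x0 x \<le> R (stage x)" if "dist x0 x \<le> R k" for x k
    unfolding stage_def using that by (rule LeastI)
  have stage_le: "stage x \<le> k" if "dist x0 x \<le> R k" for x k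
    unfolding stage_def using that by (rule Least_le)
  have agree_lim: "agree_on_ball x0 (R k) (A k) (f k) A_lim f_lim" for k
    unfolding agree_on_ball_def
  proof
    fix x assume "x \<in> cball x0 (R k)"
    then have x: "dist x0 x \<le> R k" by simp
    have "agree_on_ball x0 (R (stage x)) (A (stage x)) (f (stage x)) (A k) (f k)"
      by (rule agree_on_ball_chain[OF R agree stage_le[OF x]])
    then have "x \<in> A (stage x) \<longleftrightarrow> x \<in> A k" "x \<in> A (stage x) \<Longrightarrow> f (stage x) x = f k x"
      using stage_reaches[OF x] unfolding agree_on_ball_def by auto
    moreover have "x \<in> A_lim \<longleftrightarrow> x \<in> A (stage x)" unfolding A_lim_def using x by blast
    ultimately show "(x \<in> A k \<longleftrightarrow> x \<in> A_lim) \<and> (x \<in> A k \<longrightarrow> f k x = f_lim x)"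
      unfolding f_lim_def by auto
  qed
  have "partial_r_translation r A_lim f_lim"
    unfolding partial_r_translation_def
  proof
    show "inj_on f_lim A_lim"
    proof (rule inj_onI)
      fix x x' assume x: "x \<in> A_lim" "x' \<in> A_lim" "f_lim x = f_lim x'"
      then obtain k1 k2 where "dist x0 x \<le> R k1" "dist x0 x' \<le> R k2" unfolding A_lim_def by blast
      moreover have "R k1 \<le> R (max k1 k2)" "R k2 \<le> R (max k1 k2)" using incseqD[OF R] by simp_all
      ultimately have "x \<in> cball x0 (R (max k1 k2))" "x' \<in> cball x0 (R (max k1 k2))" by simp_all
      then have "x \<in> A (max k1 k2)" "x' \<in> A (max k1 k2)"
        "f (max k1 k2) x = f_lim x" "f (max k1 k2) x' = f_lim x'"
        using agree_lim[of "max k1 k2"] x(1,2) unfolding agree_on_ball_def by auto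
      moreover have "inj_on (f (max k1 k2)) (A (max k1 k2))"
        using pr unfolding partial_r_translation_def by blast
      ultimately show "x = x'" using x(3) by (metis inj_onD)
    qed
    show "\<forall>x\<in>A_lim. dist x (f_lim x) \<le> r"
      using pr unfolding A_lim_def f_lim_def partial_r_translation_def by blast
  qed
  from this agree_lim show ?thesis by (rule that)
qed

lemma exists_robustly_large_chain:
  fixes x0 :: "'a::metric_space" and D :: "('a \<Rightarrow> complex) set"
  assumes co: "closed_operator D h" and inv: "domain_invariant D"
    and coarse: "\<And>A f. partial_translation A f \<Longrightarrow> comm_norm D h A f < \<infinity>"
    and balls: "\<And>(x::'a) R. finite (cball x R)" and r: "0 \<le> r"
    and unbounded: "(SUP (A, f)\<in>{(A, f). partial_r_translation r A f}. comm_norm D h A f) = \<infinity>"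
  obtains A f and R :: "nat \<Rightarrow> real" where "\<And>k. partial_r_translation r (A k) (f k)" "incseq R"
    "\<And>k. agree_on_ball x0 (R k) (A k) (f k) (A (Suc k)) (f (Suc k))"
    "\<And>k A' f'. partial_r_translation r A' f' \<Longrightarrow> agree_on_ball x0 (R (Suc k)) (A (Suc k)) (f (Suc k)) A' f' \<Longrightarrow>
      ennreal (real k) < comm_norm D h A' f'"
proof -
  define good :: "real \<times> 'a set \<times> ('a \<Rightarrow> 'a) \<Rightarrow> bool"
    where "good s \<longleftrightarrow> partial_r_translation r (fst (snd s)) (snd (snd s))" for s
  define next_stage :: "nat \<Rightarrow> real \<times> 'a set \<times> ('a \<Rightarrow> 'a) \<Rightarrow> real \<times> 'a set \<times> ('a \<Rightarrow> 'a) \<Rightarrow> bool"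
    where "next_stage k s t \<longleftrightarrow> fst s \<le> fst t
      \<and> agree_on_ball x0 (fst s) (fst (snd s)) (snd (snd s)) (fst (snd t)) (snd (snd t))
      \<and> (\<forall>A' f'. partial_r_translation r A' f' \<and> agree_on_ball x0 (fst t) (fst (snd t)) (snd (snd t)) A' f'
          \<longrightarrow> ennreal (real k) < comm_norm D h A' f')" for k s t
  have "\<exists>t. good t \<and> next_stage k s t" if s: "good s" for k s
  proof -
    obtain R' A' f' where "fst s \<le> R'" "partial_r_translation r A' f'"
      "agree_on_ball x0 (fst s) (fst (snd s)) (snd (snd s)) A' f'"
      "\<And>A'' f''. partial_r_translation r A'' f'' \<Longrightarrow> agree_on_ball x0 R' A' f' A'' f'' \<Longrightarrow>
        ennreal (real k) < comm_norm D h A'' f''"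
      using exists_agreeing_robustly_large_comm_norm[OF co inv coarse balls r unbounded
          s[unfolded good_def] of_nat_0_le_iff[of k], of "fst s" x0] by blast
    then show ?thesis unfolding good_def next_stage_def by (intro exI[of _ "(R', A', f')"]) auto
  qed
  moreover have "good (0, {}, id)" unfolding good_def partial_r_translation_def by simp
  ultimately obtain S where S: "\<And>k. good (S k) \<and> next_stage k (S k) (S (Suc k))"
    using dependent_nat_choice[of "\<lambda>_. good" next_stage] by metis
  show ?thesis
  proof (rule that[of "\<lambda>k. fst (snd (S k))" "\<lambda>k. snd (snd (S k))" "\<lambda>k. fst (S k)"])
    show "partial_r_translation r (fst (snd (S k))) (snd (snd (S k)))" for k
      using S unfolding good_def by blast
    show "incseq (\<lambda>k. fst (S k))" using S unfolding next_stage_def by (intro incseq_SucI) blast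
    show "agree_on_ball x0 (fst (S k)) (fst (snd (S k))) (snd (snd (S k)))
        (fst (snd (S (Suc k)))) (snd (snd (S (Suc k))))" for k
      using S unfolding next_stage_def by blast
    show "ennreal (real k) < comm_norm D h A' f'"
      if "partial_r_translation r A' f'"
        "agree_on_ball x0 (fst (S (Suc k))) (fst (snd (S (Suc k)))) (snd (snd (S (Suc k)))) A' f'" for k A' f'
      using S[of k] that unfolding next_stage_def by blast
  qed
qed

lemma sup_comm_norm_finite_if_coarse:
  fixes D :: "('a::metric_space \<Rightarrow> complex) set"
  assumes co: "closed_operator D h" and inv: "domain_invariant D"
    and coarse: "\<And>A f. partial_translation A f \<Longrightarrow> comm_norm D h A f < \<infinity>"
    and balls: "\<And>(x::'a) R. finite (cball x R)" and r: "0 \<le> r"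
  shows "(SUP (A, f)\<in>{(A, f). partial_r_translation r A f}. comm_norm D h A f) < \<infinity>"
proof (rule ccontr)
  assume "\<not> ?thesis"
  then have unbounded: "(SUP (A, f)\<in>{(A, f). partial_r_translation r A f}. comm_norm D h A f) = \<infinity>"
    using less_top by (metis infinity_ennreal_def)
  fix x0 :: 'a
  show False
  proof (rule exists_robustly_large_chain[OF co inv coarse balls r unbounded, of x0])
    fix A f and R :: "nat \<Rightarrow> real"
    assume pr: "\<And>k. partial_r_translation r (A k) (f k)" and R: "incseq R"
      and agree: "\<And>k. agree_on_ball x0 (R k) (A k) (f k) (A (Suc k)) (f (Suc k))"
      and large: "\<And>k A' f'. partial_r_translation r A' f' \<Longrightarrow>
        agree_on_ball x0 (R (Suc k)) (A (Suc k)) (f (Suc k)) A' f' \<Longrightarrow> ennreal (real k) < comm_norm D h A' f'"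
    obtain A_lim f_lim where lim: "partial_r_translation r A_lim f_lim"
      "\<And>k. agree_on_ball x0 (R k) (A k) (f k) A_lim f_lim"
      using agree_on_ball_chain_limit[where A = A and f = f and R = R, OF pr R agree] by blast
    obtain c where "comm_norm D h A_lim f_lim = ennreal c"
      using coarse[OF partial_r_translation_imp_partial_translation[OF lim(1)]]
      by (metis infinity_ennreal_def less_top_ennreal)
    with large[OF lim] have "real k < c" for k using ennreal_less_iff[of "real k" c] by simp
    from this[of "nat \<lceil>c\<rceil>"] show False by linarith
  qed
qed

lemma finite_cball_if_uniformly_locally_finite:
  assumes "uniformly_locally_finite TYPE('a::metric_space)"
  shows "finite (cball (x::'a) R)"
proof -
  have "finite (cball x (max R 1))"
    using assms unfolding uniformly_locally_finite_def by (meson max.strict_coboundedI2 zero_less_one)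
  then show ?thesis by (rule finite_subset[rotated]) auto
qed

lemma comm_norm_finite_if_sup_finite:
  assumes sup: "\<forall>r>0. (SUP (A, f)\<in>{(A, f). partial_r_translation r A f}. comm_norm D h A f) < \<infinity>"
    and pt: "partial_translation A f"
  shows "comm_norm D h A f < \<infinity>"
proof -
  obtain c where "inj_on f A" "\<forall>x\<in>A. dist x (f x) \<le> c" using pt unfolding partial_translation_def by blast
  then have pr: "partial_r_translation (max c 1) A f" unfolding partial_r_translation_def by force
  have "comm_norm D h A f \<le> (SUP (A, f)\<in>{(A, f). partial_r_translation (max c 1) A f}. comm_norm D h A f)"
    using pr by (intro SUP_upper2[of "(A, f)"]) auto
  also have "\<dots> < \<infinity>" using sup by simp
  finally show ?thesis .
qed

theorem proposition4p1p4:
  fixes D :: "('a::metric_space \<Rightarrow> complex) set"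
    and h :: "('a \<Rightarrow> complex) \<Rightarrow> ('a \<Rightarrow> complex)"
  assumes "uniformly_locally_finite TYPE('a)"
    and "closed_operator D h"
    and "domain_invariant D"
  shows "coarse_operator D h \<longleftrightarrow>
    (\<forall>r>0. (SUP (A, f)\<in>{(A, f). partial_r_translation r A f}. comm_norm D h A f) < \<infinity>)"
proof
  assume "coarse_operator D h"
  then have coarse: "\<And>A f. partial_translation A f \<Longrightarrow> comm_norm D h A f < \<infinity>"
    unfolding coarse_operator_def by blast
  note sup_finite = sup_comm_norm_finite_if_coarse[OF assms(2,3) coarse
      finite_cball_if_uniformly_locally_finite[OF assms(1)]]
  show "\<forall>r>0. (SUP (A, f)\<in>{(A, f). partial_r_translation r A f}. comm_norm D h A f) < \<infinity>"
    using sup_finite by (simp add: less_imp_le)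
next
  assume "\<forall>r>0. (SUP (A, f)\<in>{(A, f). partial_r_translation r A f}. comm_norm D h A f) < \<infinity>"
  with assms(2,3) show "coarse_operator D h"
    unfolding coarse_operator_def by (blast intro: comm_norm_finite_if_sup_finite)
qed

end
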